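(* Let $W\in\mathbb C^{N\times N}$ be Hermitian positive definite, $\vec b\in\mathbb C^N$ with $\|\vec b\|_2=1$, and let $\vec x_k$ be the $k$-th iterate of the MINRES algorithm applied to $W\vec x=\vec b$. Let $\mu_T$ be the spectral measure of $(W,\vec b)$. Then for every $k\in\mathbb N$ (for which the orthogonal polynomials up to degree $k+1$ are defined), $$\|\vec r_k\|_2^2=\frac{1}{\sum_{j=0}^kp_j(0;\mu_T)^2}=\frac{1}{b_k(\mu_T)\big[p_{k+1}'(0;\mu_T)p_k(0;\mu_T)-p_k'(0;\mu_T)p_{k+1}(0;\mu_T)\big]}=\frac{\prod_{j=0}^{k-1}b_j(\mu_T)^2}{\pi_{k+1}'(0;\mu_T)\pi_k(0;\mu_T)-\pi_k'(0;\mu_T)\pi_{k+1}(0;\mu_T)}.$$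
   Context: Write $W=U\Lambda U^*$ with $U$ unitary and $\Lambda=\mathrm{diag}(\lambda_1,\dots,\lambda_N)$; the spectral measure of $(W,\vec b)$ is $\mu_T=\sum_j\omega_j\delta_{\lambda_j}$, $(\omega_j)=|U^*\vec b|^2$ (entrywise). $p_n(\lambda;\mu)$ are the orthonormal polynomials with positive leading coefficient for $\mu$; they satisfy $\lambda p_n=b_np_{n+1}+a_np_n+b_{n-1}p_{n-1}$ with $b_n=b_n(\mu)>0$, $p_{-1}=0$. $\pi_n(\lambda;\mu)$ is the monic orthogonal polynomial of degree $n$; primes denote derivatives in $\lambda$. MINRES iterate: $\vec x_k=\mathrm{argmin}_{\vec y\in\mathcal K_k}\|\vec b-W\vec y\|_2$ with $\mathcal K_k=\mathrm{span}\{\vec b,W\vec b,\dots,W^{k-1}\vec b\}$; $\vec r_k=\vec b-W\vec x_k$. *)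

theory Defs
  imports "HOL-Analysis.Analysis" "HOL-Computational_Algebra.Polynomial"
begin

definition adjoint_mat :: "complex^'n^'m \<Rightarrow> complex^'m^'n" where
  "adjoint_mat A = (\<chi> i j. cnj (A $ j $ i))"

definition unitary_mat :: "complex^'n^'n \<Rightarrow> bool" where
  "unitary_mat U \<longleftrightarrow> U ** adjoint_mat U = mat 1 \<and> adjoint_mat U ** U = mat 1"

definition hermitian_mat :: "complex^'n^'n \<Rightarrow> bool" where
  "hermitian_mat W \<longleftrightarrow> adjoint_mat W = W"

definition cinner_vec :: "complex^'n \<Rightarrow> complex^'n \<Rightarrow> complex" where
  "cinner_vec x y = (\<Sum>i\<in>UNIV. cnj (x $ i) * y $ i)"

definition hpd_mat :: "complex^'n^'n \<Rightarrow> bool" where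
  "hpd_mat W \<longleftrightarrow> hermitian_mat W \<and> (\<forall>x. x \<noteq> 0 \<longrightarrow> Re (cinner_vec x (W *v x)) > 0)"

definition diag_mat :: "('n \<Rightarrow> complex) \<Rightarrow> complex^'n^'n" where
  "diag_mat d = (\<chi> i j. if i = j then d i else 0)"

text \<open>The discrete measure with nodes lam j and weights om j; integrals of real polynomials.\<close>
definition spec_integral :: "('n::finite \<Rightarrow> real) \<Rightarrow> ('n \<Rightarrow> real) \<Rightarrow> (real \<Rightarrow> real) \<Rightarrow> real" where
  "spec_integral om lam f = (\<Sum>j\<in>UNIV. om j * f (lam j))"

definition spec_ip :: "('n::finite \<Rightarrow> real) \<Rightarrow> ('n \<Rightarrow> real) \<Rightarrow> real poly \<Rightarrow> real poly \<Rightarrow> real" where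
  "spec_ip om lam p q = spec_integral om lam (\<lambda>t. poly p t * poly q t)"

definition orthonormal_polys :: "('n::finite \<Rightarrow> real) \<Rightarrow> ('n \<Rightarrow> real) \<Rightarrow> nat \<Rightarrow> (nat \<Rightarrow> real poly) \<Rightarrow> bool" where
  "orthonormal_polys om lam K p \<longleftrightarrow>
     (\<forall>n\<le>K. degree (p n) = n \<and> lead_coeff (p n) > 0) \<and>
     (\<forall>m\<le>K. \<forall>n\<le>K. spec_ip om lam (p m) (p n) = (if m = n then 1 else 0))"

text \<open>Recurrence coefficient b_n: the coefficient of p_{n+1} in lambda p_n = b_n p_{n+1} + a_n p_n + b_{n-1} p_{n-1}.\<close>
definition rec_b :: "('n::finite \<Rightarrow> real) \<Rightarrow> ('n \<Rightarrow> real) \<Rightarrow> (nat \<Rightarrow> real poly) \<Rightarrow> nat \<Rightarrow> real" where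
  "rec_b om lam p n = spec_ip om lam ([:0, 1:] * p n) (p (Suc n))"

definition monic_op :: "(nat \<Rightarrow> real poly) \<Rightarrow> nat \<Rightarrow> real poly" where
  "monic_op p n = smult (1 / lead_coeff (p n)) (p n)"

fun krylov_vec :: "complex^'n^'n \<Rightarrow> complex^'n \<Rightarrow> nat \<Rightarrow> complex^'n" where
  "krylov_vec W b 0 = b"
| "krylov_vec W b (Suc i) = W *v krylov_vec W b i"

definition krylov :: "complex^'n^'n \<Rightarrow> complex^'n \<Rightarrow> nat \<Rightarrow> (complex^'n) set" where
  "krylov W b k = {(\<Sum>i<k. c i *s krylov_vec W b i) | c. True}"

definition minres_iterate :: "complex^'n^'n \<Rightarrow> complex^'n \<Rightarrow> nat \<Rightarrow> complex^'n \<Rightarrow> bool" where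
  "minres_iterate W b k x \<longleftrightarrow> x \<in> krylov W b k \<and>
     (\<forall>y\<in>krylov W b k. norm (b - W *v x) \<le> norm (b - W *v y))"

end

theory Submission
  imports Defs
begin

text \<open>
  In the eigenbasis of W the Krylov vector W^i b has coordinates lam_j^i (U^* b)_j, so a residual
  b - W y with y in K_k is q(W) b for a polynomial q of degree at most k with q(0) = 1, and its
  squared norm is the integral of |q|^2 against mu_T. Expanding q in p_0, ..., p_k and applying
  Cauchy-Schwarz shows that this integral is at least 1 / sum_j p_j(0)^2, with equality for the
  normalised reproducing kernel sum_j p_j(0) p_j. The confluent Christoffel-Darboux formula,
  proved by induction from the three-term recurrence, rewrites the sum, and
  lead_coeff p_n = 1 / (b_0 ... b_(n-1)) converts it to the monic polynomials.
\<close>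

section \<open>Orthonormal polynomials of a discrete measure\<close>

lemma spec_ip_commute: "spec_ip om lam q r = spec_ip om lam r q"
  unfolding spec_ip_def spec_integral_def by (simp add: mult_ac)

lemma spec_ip_sum_left: "spec_ip om lam (\<Sum>j\<in>A. f j) r = (\<Sum>j\<in>A. spec_ip om lam (f j) r)"
  unfolding spec_ip_def spec_integral_def poly_sum
  by (simp add: sum_distrib_left sum_distrib_right mult_ac sum.swap[of _ A])

lemma spec_ip_smult_left: "spec_ip om lam (smult c q) r = c * spec_ip om lam q r"
  unfolding spec_ip_def spec_integral_def by (simp add: sum_distrib_left mult_ac)

lemma spec_ip_x_left: "spec_ip om lam ([:0, 1:] * q) r = spec_ip om lam q ([:0, 1:] * r)"
  unfolding spec_ip_def spec_integral_def by (simp add: mult_ac)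

lemma spec_ip_self_nonneg: "(\<And>j. 0 \<le> om j) \<Longrightarrow> 0 \<le> spec_ip om lam q q"
  unfolding spec_ip_def spec_integral_def by (simp add: sum_nonneg)

lemma x_mult_eq_pCons: "[:0, 1:] * q = pCons 0 (q :: 'a::comm_semiring_1 poly)"
  by (simp add: mult_pCons_left)

definition rec_a ::
    "('n::finite \<Rightarrow> real) \<Rightarrow> ('n \<Rightarrow> real) \<Rightarrow> (nat \<Rightarrow> real poly) \<Rightarrow> nat \<Rightarrow> real" where
  "rec_a om lam p n = spec_ip om lam ([:0, 1:] * p n) (p n)"

context
  fixes om lam :: "'n::finite \<Rightarrow> real" and K :: nat and p :: "nat \<Rightarrow> real poly"
  assumes ops: "orthonormal_polys om lam K p"
begin

lemma degree_orthonormal: "n \<le> K \<Longrightarrow> degree (p n) = n"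
  using ops unfolding orthonormal_polys_def by blast

lemma lead_coeff_orthonormal_pos: "n \<le> K \<Longrightarrow> lead_coeff (p n) > 0"
  using ops unfolding orthonormal_polys_def by blast

lemma spec_ip_orthonormal:
  "m \<le> K \<Longrightarrow> n \<le> K \<Longrightarrow> spec_ip om lam (p m) (p n) = (if m = n then 1 else 0)"
  using ops unfolding orthonormal_polys_def by blast

lemma orthonormal_polys_mono: "K' \<le> K \<Longrightarrow> orthonormal_polys om lam K' p"
  using ops le_trans unfolding orthonormal_polys_def by blast

lemma orthonormal_0_eq_const: "p 0 = [:lead_coeff (p 0):]"
  using degree_0_id[of "p 0"] degree_orthonormal[of 0] by simp

lemma poly_orthonormal_0: "poly (p 0) x = lead_coeff (p 0)"
  by (subst orthonormal_0_eq_const) simp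

lemma orthonormal_span:
  "n \<le> K \<Longrightarrow> degree q \<le> n \<Longrightarrow> \<exists>c. q = (\<Sum>j\<le>n. smult (c j) (p j))"
proof (induction n arbitrary: q)
  case 0
  define l where "l = lead_coeff (p 0)"
  have "l > 0" using lead_coeff_orthonormal_pos[of 0] by (simp add: l_def)
  moreover have "p 0 = [:l:]" unfolding l_def by (rule orthonormal_0_eq_const)
  moreover have "q = [:coeff q 0:]" using 0 degree_0_id[of q] by simp
  ultimately have "q = smult (coeff q 0 / l) (p 0)" by simp
  then show ?case by auto
next
  case (Suc n)
  define a where "a = coeff q (Suc n) / lead_coeff (p (Suc n))"
  have deg: "degree (p (Suc n)) = Suc n" and lc: "lead_coeff (p (Suc n)) > 0"
    using degree_orthonormal lead_coeff_orthonormal_pos Suc.prems(1) by auto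
  have "degree (q - smult a (p (Suc n))) \<le> n"
  proof (rule degree_le, intro allI impI)
    fix i assume "n < i"
    show "coeff (q - smult a (p (Suc n))) i = 0"
    proof (cases "i = Suc n")
      case True
      then show ?thesis using lc deg by (simp add: a_def)
    next
      case False
      then show ?thesis using \<open>n < i\<close> Suc.prems(2) deg by (simp add: coeff_eq_0)
    qed
  qed
  then obtain c where "q - smult a (p (Suc n)) = (\<Sum>j\<le>n. smult (c j) (p j))"
    using Suc by fastforce
  then have "q = (\<Sum>j\<le>Suc n. smult ((c(Suc n := a)) j) (p j))"
    by (simp add: algebra_simps)
  then show ?case by blast
qed

lemma spec_ip_orthonormal_sum:
  assumes "n \<le> K" "m \<le> K"
  shows "spec_ip om lam (\<Sum>j\<le>n. smult (c j) (p j)) (p m) = (if m \<le> n then c m else 0)"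
proof -
  have "spec_ip om lam (\<Sum>j\<le>n. smult (c j) (p j)) (p m) = (\<Sum>j\<le>n. if j = m then c j else 0)"
    unfolding spec_ip_sum_left spec_ip_smult_left
    by (rule sum.cong) (use assms in \<open>auto simp: spec_ip_orthonormal\<close>)
  then show ?thesis by simp
qed

lemma spec_ip_orthonormal_sum_self:
  assumes "n \<le> K"
  shows "spec_ip om lam (\<Sum>j\<le>n. smult (c j) (p j)) (\<Sum>j\<le>n. smult (c j) (p j)) =
    (\<Sum>j\<le>n. (c j)\<^sup>2)"
proof -
  let ?s = "\<Sum>j\<le>n. smult (c j) (p j)"
  have "spec_ip om lam ?s ?s = (\<Sum>j\<le>n. c j * spec_ip om lam (p j) ?s)"
    by (simp add: spec_ip_sum_left spec_ip_smult_left)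
  also have "\<dots> = (\<Sum>j\<le>n. c j * spec_ip om lam ?s (p j))"
    by (simp only: spec_ip_commute)
  also have "\<dots> = (\<Sum>j\<le>n. (c j)\<^sup>2)"
    by (intro sum.cong) (use assms in \<open>simp_all add: spec_ip_orthonormal_sum power2_eq_square\<close>)
  finally show ?thesis .
qed

lemma spec_ip_orthonormal_low_degree:
  assumes "m \<le> K" "degree q < m"
  shows "spec_ip om lam q (p m) = 0"
proof -
  obtain c where "q = (\<Sum>j\<le>degree q. smult (c j) (p j))"
    using orthonormal_span[of "degree q" q] assms by auto
  then show ?thesis
    using assms spec_ip_orthonormal_sum[of "degree q" m c] by simp
qed

lemma christoffel_sum_pos: "0 < (\<Sum>j\<le>k. (poly (p j) x)\<^sup>2)"
proof -
  have "(poly (p 0) x)\<^sup>2 \<le> (\<Sum>j\<le>k. (poly (p j) x)\<^sup>2)"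
    by (rule member_le_sum) auto
  moreover have "poly (p 0) x > 0"
    using poly_orthonormal_0 lead_coeff_orthonormal_pos[of 0] by simp
  ultimately show ?thesis
    by (meson less_le_trans zero_less_power)
qed

lemma christoffel_function_le:
  assumes "k \<le> K" "degree q \<le> k" "poly q x = 1"
  shows "1 / (\<Sum>j\<le>k. (poly (p j) x)\<^sup>2) \<le> spec_ip om lam q q"
proof -
  obtain c where q: "q = (\<Sum>j\<le>k. smult (c j) (p j))"
    using orthonormal_span assms by blast
  have "1 = (\<Sum>j\<le>k. c j * poly (p j) x)\<^sup>2"
    using assms(3) by (simp add: q poly_sum)
  also have "\<dots> \<le> (\<Sum>j\<le>k. (c j)\<^sup>2) * (\<Sum>j\<le>k. (poly (p j) x)\<^sup>2)"
    by (rule Cauchy_Schwarz_ineq_sum)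
  also have "(\<Sum>j\<le>k. (c j)\<^sup>2) = spec_ip om lam q q"
    using assms(1) by (simp add: q spec_ip_orthonormal_sum_self)
  finally show ?thesis
    using christoffel_sum_pos by (simp add: divide_le_eq)
qed

lemma christoffel_function_attained:
  assumes "k \<le> K"
  shows "\<exists>q. degree q \<le> k \<and> poly q x = 1 \<and>
    spec_ip om lam q q = 1 / (\<Sum>j\<le>k. (poly (p j) x)\<^sup>2)"
proof -
  define S where "S = (\<Sum>j\<le>k. (poly (p j) x)\<^sup>2)"
  have "S > 0" unfolding S_def by (rule christoffel_sum_pos)
  \<comment> \<open>the reproducing kernel at x, normalised to take the value 1 at x\<close>
  define q where "q = (\<Sum>j\<le>k. smult (poly (p j) x / S) (p j))"
  have "degree q \<le> k"
    unfolding q_def using assms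
    by (intro degree_sum_le) (auto intro: order.trans[OF degree_smult_le] simp: degree_orthonormal)
  moreover have "poly q x = 1"
    using \<open>S > 0\<close> by (simp add: q_def S_def poly_sum sum_divide_distrib[symmetric] power2_eq_square)
  moreover have "spec_ip om lam q q = 1 / S"
  proof -
    have "spec_ip om lam q q = (\<Sum>j\<le>k. (poly (p j) x / S)\<^sup>2)"
      unfolding q_def using assms by (rule spec_ip_orthonormal_sum_self)
    also have "\<dots> = S / S\<^sup>2"
      by (simp add: S_def power_divide sum_divide_distrib)
    finally show ?thesis using \<open>S > 0\<close> by (simp add: power2_eq_square)
  qed
  ultimately show ?thesis unfolding S_def by blast
qed

lemma orthonormal_recurrence:
  assumes "Suc n \<le> K"
  shows "[:0, 1:] * p n = smult (rec_b om lam p n) (p (Suc n)) + smult (rec_a om lam p n) (p n)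
    + (if n = 0 then 0 else smult (rec_b om lam p (n - 1)) (p (n - 1)))"
proof -
  let ?s = "[:0, 1:] * p n"
  have "degree ?s \<le> Suc n"
    using degree_mult_le[of "[:0, 1:]" "p n"] degree_orthonormal[of n] assms by simp
  then obtain c where s: "?s = (\<Sum>j\<le>Suc n. smult (c j) (p j))"
    using orthonormal_span assms by blast
  have c: "c j = spec_ip om lam ?s (p j)" if "j \<le> Suc n" for j
    using spec_ip_orthonormal_sum[of "Suc n" j c] that assms unfolding s[symmetric] by simp
  have c_sym: "c j = spec_ip om lam ([:0, 1:] * p j) (p n)" if "j \<le> Suc n" for j
    using c[OF that] spec_ip_x_left spec_ip_commute by metis
  have c_low: "c j = 0" if "Suc j < n" for j
  proof -
    have "degree ([:0, 1:] * p j) < n"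
      using degree_mult_le[of "[:0, 1:]" "p j"] degree_orthonormal[of j] that assms by simp
    then show ?thesis
      using c_sym[of j] that assms by (simp add: spec_ip_orthonormal_low_degree)
  qed
  have c_top: "c (Suc n) = rec_b om lam p n" and c_mid: "c n = rec_a om lam p n"
    using c by (simp_all add: rec_b_def rec_a_def)
  show ?thesis
  proof (cases n)
    case 0
    then show ?thesis using s c_top c_mid by simp
  next
    case (Suc m)
    have "c m = rec_b om lam p m"
      using c_sym[of m] Suc by (simp add: rec_b_def)
    moreover have "(\<Sum>j<m. smult (c j) (p j)) = 0"
      using c_low Suc by simp
    moreover have "(\<Sum>j\<le>Suc n. smult (c j) (p j)) = (\<Sum>j<m. smult (c j) (p j))
        + smult (c m) (p m) + smult (c n) (p n) + smult (c (Suc n)) (p (Suc n))"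
      using Suc by (simp add: lessThan_Suc_atMost[symmetric])
    ultimately show ?thesis using s c_top c_mid Suc by (simp add: algebra_simps)
  qed
qed

lemma lead_coeff_recurrence:
  assumes "Suc n \<le> K"
  shows "lead_coeff (p n) = rec_b om lam p n * lead_coeff (p (Suc n))"
proof -
  have "coeff ([:0, 1:] * p n) (Suc n) =
    coeff (smult (rec_b om lam p n) (p (Suc n)) + smult (rec_a om lam p n) (p n)
    + (if n = 0 then 0 else smult (rec_b om lam p (n - 1)) (p (n - 1)))) (Suc n)"
    using orthonormal_recurrence[OF assms] by (rule arg_cong)
  then show ?thesis
    using assms degree_orthonormal[of n] degree_orthonormal[of "Suc n"] degree_orthonormal[of "n - 1"]
    by (simp add: x_mult_eq_pCons coeff_eq_0)
qed

lemma lead_coeff_prod_rec_b: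
  "n \<le> K \<Longrightarrow> lead_coeff (p n) * (\<Prod>j<n. rec_b om lam p j) = lead_coeff (p 0)"
proof (induction n)
  case (Suc n)
  then show ?case
    using lead_coeff_recurrence[of n] by (simp add: mult_ac)
qed simp

lemma christoffel_darboux_step:
  fixes x :: real
  assumes n: "Suc n \<le> K"
  defines "w m \<equiv> rec_b om lam p m *
    (poly (pderiv (p (Suc m))) x * poly (p m) x - poly (pderiv (p m)) x * poly (p (Suc m)) x)"
  shows "w n = (poly (p n) x)\<^sup>2 + (if n = 0 then 0 else w (n - 1))"
proof -
  let ?P = "poly (p n) x" and ?D = "poly (pderiv (p n)) x"
  let ?r = "if n = 0 then 0 else rec_b om lam p (n - 1) * poly (p (n - 1)) x"
  let ?r' = "if n = 0 then 0 else rec_b om lam p (n - 1) * poly (pderiv (p (n - 1))) x"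
  note rec = orthonormal_recurrence[OF n]
  have val: "rec_b om lam p n * poly (p (Suc n)) x = x * ?P - rec_a om lam p n * ?P - ?r"
    using arg_cong[OF rec, of "\<lambda>q. poly q x"] by simp
  have der: "rec_b om lam p n * poly (pderiv (p (Suc n))) x = ?P + x * ?D - rec_a om lam p n * ?D - ?r'"
    using arg_cong[OF rec, of "\<lambda>q. poly (pderiv q) x"]
    by (simp add: x_mult_eq_pCons pderiv_pCons pderiv_add pderiv_smult)
  have "w n = (rec_b om lam p n * poly (pderiv (p (Suc n))) x) * ?P - ?D * (rec_b om lam p n * poly (p (Suc n)) x)"
    unfolding w_def by (simp add: algebra_simps)
  also have "\<dots> = ?P\<^sup>2 + (?D * ?r - ?r' * ?P)"
    unfolding val der by (simp add: algebra_simps power2_eq_square)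
  also have "?D * ?r - ?r' * ?P = (if n = 0 then 0 else w (n - 1))"
    by (cases n) (simp_all add: w_def algebra_simps)
  finally show ?thesis .
qed

lemma christoffel_darboux_confluent:
  "Suc n \<le> K \<Longrightarrow> (\<Sum>j\<le>n. (poly (p j) x)\<^sup>2) = rec_b om lam p n *
    (poly (pderiv (p (Suc n))) x * poly (p n) x - poly (pderiv (p n)) x * poly (p (Suc n)) x)"
  by (induction n) (simp_all add: christoffel_darboux_step)

lemma lead_coeff_orthonormal_0_eq_1:
  assumes "(\<Sum>j\<in>UNIV. om j) = 1"
  shows "lead_coeff (p 0) = 1"
proof -
  have "1 = spec_ip om lam (p 0) (p 0)"
    by (simp add: spec_ip_orthonormal)
  also have "\<dots> = (\<Sum>j\<in>UNIV. om j) * (lead_coeff (p 0))\<^sup>2"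
    by (simp add: spec_ip_def spec_integral_def poly_orthonormal_0 sum_distrib_right power2_eq_square)
  finally have "(lead_coeff (p 0))\<^sup>2 = 1"
    using assms by simp
  then show ?thesis
    using lead_coeff_orthonormal_pos[of 0] by (simp add: power2_eq_1_iff)
qed

lemma monic_christoffel_darboux:
  assumes "Suc k \<le> K" "lead_coeff (p 0) = 1"
  shows "(\<Prod>j<k. (rec_b om lam p j)\<^sup>2) /
      (poly (pderiv (monic_op p (Suc k))) x * poly (monic_op p k) x
       - poly (pderiv (monic_op p k)) x * poly (monic_op p (Suc k)) x)
    = 1 / (rec_b om lam p k *
      (poly (pderiv (p (Suc k))) x * poly (p k) x - poly (pderiv (p k)) x * poly (p (Suc k)) x))"
proof -
  define L0 L1 where "L0 = lead_coeff (p k)" and "L1 = lead_coeff (p (Suc k))"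
  define X where "X = poly (pderiv (p (Suc k))) x * poly (p k) x - poly (pderiv (p k)) x * poly (p (Suc k)) x"
  have "L0 > 0" "L1 > 0"
    using lead_coeff_orthonormal_pos assms(1) by (auto simp: L0_def L1_def)
  have "L0 * (\<Prod>j<k. rec_b om lam p j) = 1"
    using lead_coeff_prod_rec_b[of k] assms by (simp add: L0_def)
  then have prod: "(\<Prod>j<k. (rec_b om lam p j)\<^sup>2) = 1 / L0\<^sup>2"
    using \<open>L0 > 0\<close> by (simp add: prod_power_distrib[symmetric] field_simps power_mult_distrib[symmetric])
  have rec_b: "rec_b om lam p k = L0 / L1"
    using lead_coeff_recurrence[OF assms(1)] \<open>L1 > 0\<close>
    unfolding L0_def[symmetric] L1_def[symmetric] by (simp add: field_simps)
  have monic: "poly (pderiv (monic_op p (Suc k))) x * poly (monic_op p k) x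
       - poly (pderiv (monic_op p k)) x * poly (monic_op p (Suc k)) x = X / (L0 * L1)"
    unfolding monic_op_def X_def L0_def[symmetric] L1_def[symmetric]
    using \<open>L0 > 0\<close> \<open>L1 > 0\<close> by (simp add: pderiv_smult field_simps)
  show ?thesis
    unfolding X_def[symmetric] monic prod rec_b using \<open>L0 > 0\<close> \<open>L1 > 0\<close>
    by (cases "X = 0") (simp_all add: field_simps power2_eq_square)
qed

end

section \<open>MINRES residuals and the spectral measure\<close>

lemma norm_vec_power2: "(norm (x::complex^'n))\<^sup>2 = (\<Sum>i\<in>UNIV. (cmod (x$i))\<^sup>2)"
  unfolding norm_vec_def L2_set_def by (simp add: sum_nonneg)

lemma cinner_vec_self: "cinner_vec x x = of_real ((norm x)\<^sup>2)"
  unfolding cinner_vec_def norm_vec_power2 of_real_sum complex_norm_square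
  by (simp add: mult.commute)

lemma cinner_vec_mult_left: "cinner_vec (A *v x) y = cinner_vec x (adjoint_mat A *v y)"
proof -
  have "cinner_vec (A *v x) y = (\<Sum>i\<in>UNIV. \<Sum>j\<in>UNIV. cnj (x$j) * (cnj (A$i$j) * y$i))"
    by (simp add: cinner_vec_def matrix_vector_mult_def sum_distrib_left sum_distrib_right mult_ac)
  also have "\<dots> = cinner_vec x (adjoint_mat A *v y)"
    by (subst sum.swap) (simp add: cinner_vec_def matrix_vector_mult_def adjoint_mat_def sum_distrib_left)
  finally show ?thesis .
qed

lemma adjoint_mat_adjoint_mat [simp]: "adjoint_mat (adjoint_mat A) = A"
  by (simp add: adjoint_mat_def vec_eq_iff)

lemma norm_isometry_mult_vec:
  assumes "adjoint_mat U ** U = mat 1"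
  shows "norm (U *v v) = norm v"
proof -
  have "of_real ((norm (U *v v))\<^sup>2) = cinner_vec (U *v v) (U *v v)"
    by (rule cinner_vec_self[symmetric])
  also have "\<dots> = cinner_vec v (adjoint_mat U *v (U *v v))"
    by (rule cinner_vec_mult_left)
  also have "\<dots> = of_real ((norm v)\<^sup>2)"
    by (simp add: matrix_vector_mul_assoc assms cinner_vec_self)
  finally have "(norm (U *v v))\<^sup>2 = (norm v)\<^sup>2"
    by (simp only: of_real_eq_iff)
  then show ?thesis by (simp add: power2_eq_iff_nonneg)
qed

lemma diag_mat_mult_vec: "diag_mat d *v v = (\<chi> i. d i * v $ i)"
proof -
  have "(if i = j then d i else 0) * v $ j = (if i = j then d i * v $ j else 0)" for i j
    by simp
  then show ?thesis
    by (simp add: diag_mat_def matrix_vector_mult_def vec_eq_iff)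
qed

lemma cmod_sum_powers_power2:
  "(cmod (\<Sum>i<m. d i * of_real t ^ i))\<^sup>2 =
     (poly (\<Sum>i<m. monom (Re (d i)) i) t)\<^sup>2 + (poly (\<Sum>i<m. monom (Im (d i)) i) t)\<^sup>2"
proof -
  have "d i * of_real t ^ i = d i * of_real (t ^ i)" for i
    by simp
  then show ?thesis
    unfolding cmod_power2 by (simp add: Re_sum Im_sum poly_sum poly_monom)
qed

lemma residual_krylov_comb:
  "b - W *v (\<Sum>i<k. c i *s krylov_vec W b i) =
     (\<Sum>i<Suc k. (if i = 0 then 1 else - c (i - 1)) *s krylov_vec W b i)"
  by (subst sum.lessThan_Suc_shift) (simp add: vec.sum vector_scalar_commute sum_negf)

locale spectral_measure =
  fixes W U :: "complex^'n^'n" and lam :: "'n \<Rightarrow> real"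
    and b :: "complex^'n" and om :: "'n \<Rightarrow> real"
  assumes unitary: "unitary_mat U"
    and decomp: "W = U ** diag_mat (\<lambda>j. complex_of_real (lam j)) ** adjoint_mat U"
    and weights: "\<And>j. om j = (cmod ((adjoint_mat U *v b) $ j))\<^sup>2"
begin

lemma unitary_mult_adjoint: "U ** adjoint_mat U = mat 1" and adjoint_mult_unitary: "adjoint_mat U ** U = mat 1"
  using unitary unfolding unitary_mat_def by auto

lemma sum_weights: "(\<Sum>j\<in>UNIV. om j) = (norm b)\<^sup>2"
proof -
  have "(\<Sum>j\<in>UNIV. om j) = (norm (adjoint_mat U *v b))\<^sup>2"
    by (simp add: weights norm_vec_power2)
  also have "\<dots> = (norm b)\<^sup>2"
    using norm_isometry_mult_vec[of "adjoint_mat U"] by (simp add: unitary_mult_adjoint)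
  finally show ?thesis .
qed

lemma krylov_vec_eq:
  "krylov_vec W b i = U *v (\<chi> j. of_real (lam j) ^ i * (adjoint_mat U *v b) $ j)"
proof (induction i)
  case 0
  show ?case by (simp add: matrix_vector_mul_assoc unitary_mult_adjoint)
next
  case (Suc i)
  have "W ** U = U ** diag_mat (\<lambda>j. complex_of_real (lam j))"
    by (simp add: decomp matrix_mul_assoc[symmetric] adjoint_mult_unitary)
  then have "W *v (U *v v) = U *v (diag_mat (\<lambda>j. complex_of_real (lam j)) *v v)" for v
    by (simp add: matrix_vector_mul_assoc)
  then show ?case
    by (simp add: Suc diag_mat_mult_vec mult_ac)
qed

lemma krylov_comb_eq:
  "(\<Sum>i<m. d i *s krylov_vec W b i) =
     U *v (\<chi> j. (\<Sum>i<m. d i * of_real (lam j) ^ i) * (adjoint_mat U *v b) $ j)"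
proof -
  have "(\<Sum>i<m. d i *s (\<chi> j. of_real (lam j) ^ i * (adjoint_mat U *v b) $ j)) =
      (\<chi> j. (\<Sum>i<m. d i * of_real (lam j) ^ i) * (adjoint_mat U *v b) $ j)"
    by (simp add: vec_eq_iff sum_component sum_distrib_right mult.assoc)
  then show ?thesis
    by (simp add: krylov_vec_eq vector_scalar_commute[symmetric] vec.sum[symmetric])
qed

lemma norm_krylov_comb_power2:
  "(norm (\<Sum>i<m. d i *s krylov_vec W b i))\<^sup>2 =
     spec_ip om lam (\<Sum>i<m. monom (Re (d i)) i) (\<Sum>i<m. monom (Re (d i)) i) +
     spec_ip om lam (\<Sum>i<m. monom (Im (d i)) i) (\<Sum>i<m. monom (Im (d i)) i)"
proof -
  have "(norm (\<Sum>i<m. d i *s krylov_vec W b i))\<^sup>2 =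
      (\<Sum>j\<in>UNIV. om j * (cmod (\<Sum>i<m. d i * of_real (lam j) ^ i))\<^sup>2)"
    unfolding krylov_comb_eq norm_isometry_mult_vec[OF adjoint_mult_unitary] norm_vec_power2
    by (simp add: weights norm_mult power_mult_distrib mult.commute)
  then show ?thesis
    unfolding cmod_sum_powers_power2
    by (simp add: spec_ip_def spec_integral_def power2_eq_square distrib_left sum.distrib)
qed

lemma norm_residual_ge:
  assumes ops: "orthonormal_polys om lam k p" and "y \<in> krylov W b k"
  shows "1 / (\<Sum>j\<le>k. (poly (p j) 0)\<^sup>2) \<le> (norm (b - W *v y))\<^sup>2"
proof -
  obtain c where y: "y = (\<Sum>i<k. c i *s krylov_vec W b i)"
    using assms(2) unfolding krylov_def by auto
  define d where "d i = (if i = 0 then 1 else - c (i - 1))" for i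
  define qr where "qr = (\<Sum>i<Suc k. monom (Re (d i)) i)"
  define qi where "qi = (\<Sum>i<Suc k. monom (Im (d i)) i)"
  have "(norm (b - W *v y))\<^sup>2 = spec_ip om lam qr qr + spec_ip om lam qi qi"
    unfolding y residual_krylov_comb qr_def qi_def d_def by (rule norm_krylov_comb_power2)
  moreover have "1 / (\<Sum>j\<le>k. (poly (p j) 0)\<^sup>2) \<le> spec_ip om lam qr qr"
  proof (rule christoffel_function_le[OF ops order_refl])
    show "degree qr \<le> k"
      unfolding qr_def by (intro degree_sum_le) (auto intro: order.trans[OF degree_monom_le])
    show "poly qr 0 = 1"
      by (simp add: qr_def d_def poly_0_coeff_0 coeff_sum)
  qed
  moreover have "0 \<le> spec_ip om lam qi qi"
    by (rule spec_ip_self_nonneg) (simp add: weights)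
  ultimately show ?thesis by linarith
qed

lemma norm_residual_attained:
  assumes ops: "orthonormal_polys om lam k p"
  shows "\<exists>y\<in>krylov W b k. (norm (b - W *v y))\<^sup>2 = 1 / (\<Sum>j\<le>k. (poly (p j) 0)\<^sup>2)"
proof -
  obtain q where q: "degree q \<le> k" "poly q 0 = 1"
    and q_min: "spec_ip om lam q q = 1 / (\<Sum>j\<le>k. (poly (p j) 0)\<^sup>2)"
    using christoffel_function_attained[OF ops order_refl] by blast
  define y where "y = (\<Sum>i<k. (- of_real (coeff q (Suc i))) *s krylov_vec W b i)"
  have "y \<in> krylov W b k"
    unfolding y_def krylov_def by (intro CollectI exI[of _ "\<lambda>i. - of_real (coeff q (Suc i))"]) simp
  moreover have "(if i = 0 then 1 else - (- of_real (coeff q (Suc (i - 1))))) = complex_of_real (coeff q i)" for i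
    using q(2) by (cases i) (simp_all add: poly_0_coeff_0)
  then have "(norm (b - W *v y))\<^sup>2 = spec_ip om lam q q"
    unfolding y_def residual_krylov_comb norm_krylov_comb_power2
    using poly_as_sum_of_monoms'[OF q(1)] by (simp add: lessThan_Suc_atMost spec_ip_def spec_integral_def)
  ultimately show ?thesis
    using q_min by auto
qed

lemma norm_minres_residual_power2:
  assumes ops: "orthonormal_polys om lam k p" and "minres_iterate W b k x"
  shows "(norm (b - W *v x))\<^sup>2 = 1 / (\<Sum>j\<le>k. (poly (p j) 0)\<^sup>2)"
proof -
  obtain y where "y \<in> krylov W b k"
    and y: "(norm (b - W *v y))\<^sup>2 = 1 / (\<Sum>j\<le>k. (poly (p j) 0)\<^sup>2)"
    using norm_residual_attained[OF ops] by blast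
  with assms(2) have "x \<in> krylov W b k" and "norm (b - W *v x) \<le> norm (b - W *v y)"
    unfolding minres_iterate_def by auto
  then have "(norm (b - W *v x))\<^sup>2 \<le> (norm (b - W *v y))\<^sup>2"
    by (simp add: power_mono)
  then show ?thesis
    using norm_residual_ge[OF ops \<open>x \<in> krylov W b k\<close>] y by linarith
qed

end

theorem proposition4p2:
  fixes W U :: "complex^'n^'n" and b x :: "complex^'n" and lam om :: "'n \<Rightarrow> real"
    and p :: "nat \<Rightarrow> real poly" and k :: nat
  assumes hpd: "hpd_mat W"
    and bnorm: "norm b = 1"
    and unitary: "unitary_mat U"
    and decomp: "W = U ** diag_mat (\<lambda>j. complex_of_real (lam j)) ** adjoint_mat U"
    and weights: "\<And>j. om j = (cmod ((adjoint_mat U *v b) $ j))\<^sup>2"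
    and ops: "orthonormal_polys om lam (Suc k) p"
    and minres: "minres_iterate W b k x"
  shows "(norm (b - W *v x))\<^sup>2 = 1 / (\<Sum>j\<le>k. (poly (p j) 0)\<^sup>2)
    \<and> (norm (b - W *v x))\<^sup>2 =
        1 / (rec_b om lam p k * (poly (pderiv (p (Suc k))) 0 * poly (p k) 0
                                 - poly (pderiv (p k)) 0 * poly (p (Suc k)) 0))
    \<and> (norm (b - W *v x))\<^sup>2 =
        (\<Prod>j<k. (rec_b om lam p j)\<^sup>2) /
        (poly (pderiv (monic_op p (Suc k))) 0 * poly (monic_op p k) 0
         - poly (pderiv (monic_op p k)) 0 * poly (monic_op p (Suc k)) 0)"
proof -
  interpret spectral_measure W U lam b om
    using unitary decomp weights by unfold_locales
  have R: "(norm (b - W *v x))\<^sup>2 = 1 / (\<Sum>j\<le>k. (poly (p j) 0)\<^sup>2)"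
    by (rule norm_minres_residual_power2[OF orthonormal_polys_mono[OF ops] minres]) simp
  have CD: "(\<Sum>j\<le>k. (poly (p j) 0)\<^sup>2) = rec_b om lam p k *
      (poly (pderiv (p (Suc k))) 0 * poly (p k) 0 - poly (pderiv (p k)) 0 * poly (p (Suc k)) 0)"
    using christoffel_darboux_confluent[OF ops] by simp
  have "lead_coeff (p 0) = 1"
    using lead_coeff_orthonormal_0_eq_1[OF ops] sum_weights bnorm by simp
  then show ?thesis
    using R CD monic_christoffel_darboux[OF ops order_refl, of 0] by simp
qed

end
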